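(* Let $X_1,X_2,\dots$ be independent Poisson random variables with $\mathbb{E}[X_i]=\lambda_i>0$ for $i\in\mathbb{N}$. Define $S_n=\sum_{i=1}^nX_i$, $\overline{\lambda}_n=\frac1n\sum_{i=1}^n\lambda_i$, and $\mathcal{V}(s,n)=n\overline{\lambda}_n(e^s-1)$ for $s\in\mathbb{R}$, $n\in\mathbb{N}$. Then for every positive integer $m$ and all $\theta\in(0,\infty)$, \[ \Pr\Big\{\sup_{n\in\mathbb{N}}\big[\zeta(S_n-m\theta)-\mathcal{V}(\zeta,n)+\mathcal{V}(\zeta,m)\big]\ge0\Big\}\le\Big[\exp\Big(\theta-\overline{\lambda}_m+\theta\ln\frac{\overline{\lambda}_m}{\theta}\Big)\Big]^m, \] where $\zeta=\ln\frac{\theta}{\overline{\lambda}_m}$.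
   Context: $\mathbb{N}$ denotes the set of positive integers. *)

theory Defs
  imports "HOL-Probability.Probability"
begin

definition lam_bar :: "(nat \<Rightarrow> real) \<Rightarrow> nat \<Rightarrow> real" where
  "lam_bar lam n = (1 / real n) * (\<Sum>i=1..n. lam i)"

definition VV :: "(nat \<Rightarrow> real) \<Rightarrow> real \<Rightarrow> nat \<Rightarrow> real" where
  "VV lam s n = real n * lam_bar lam n * (exp s - 1)"

definition partial_sum :: "(nat \<Rightarrow> 'a \<Rightarrow> nat) \<Rightarrow> nat \<Rightarrow> 'a \<Rightarrow> real" where
  "partial_sum X n \<omega> = (\<Sum>i=1..n. real (X i \<omega>))"

end

theory Submission
  imports Defs
begin

text \<open>
  The factors \<open>exp (\<zeta> X\<^sub>i - \<lambda>\<^sub>i (e\<^sup>\<zeta> - 1))\<close> are independent with mean one, because the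
  Poisson moment generating function is \<open>exp (\<lambda> (e\<^sup>\<zeta> - 1))\<close>. Their partial products
  \<open>Z\<^sub>n = exp (\<zeta> S\<^sub>n - \<V>(\<zeta>, n))\<close> therefore form a nonnegative martingale of mean one, and the
  event in question says that \<open>sup\<^sub>n Z\<^sub>n \<ge> exp (\<zeta> m \<theta> - \<V>(\<zeta>, m))\<close>. By Ville's maximal
  inequality its probability is at most the reciprocal of that level, which equals the stated
  bound. Ville's inequality follows by splitting the event according to the first passage time
  \<open>k\<close> above the level \<open>c\<close>: on the first passage event \<open>A\<^sub>k\<close> the martingale property gives
  \<open>c P(A\<^sub>k) \<le> E[Z\<^sub>k; A\<^sub>k] = E[Z\<^sub>N; A\<^sub>k]\<close>, and the \<open>A\<^sub>k\<close> are disjoint.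
\<close>

lemma pmf_poisson_exp_tilt:
  assumes "0 < l"
  shows "pmf (poisson_pmf l) k * exp (z * real k - l * (exp z - 1)) = pmf (poisson_pmf (l * exp z)) k"
proof -
  have "exp (z * real k - l * (exp z - 1)) * exp (- l) = exp z ^ k * exp (- (l * exp z))"
    by (simp add: exp_add[symmetric] exp_of_nat_mult[symmetric] algebra_simps)
  then show ?thesis
    using assms by (simp add: power_mult_distrib field_simps)
qed

lemma (in prob_space) nn_integral_poisson_exp_tilt:
  fixes X :: "'a \<Rightarrow> nat"
  assumes "X \<in> measurable M (count_space UNIV)"
    and "distr M (count_space UNIV) X = measure_pmf (poisson_pmf l)" and "0 < l"
  shows "(\<integral>\<^sup>+\<omega>. ennreal (exp (z * real (X \<omega>) - l * (exp z - 1))) \<partial>M) = 1"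
proof -
  have "(\<integral>\<^sup>+\<omega>. ennreal (exp (z * real (X \<omega>) - l * (exp z - 1))) \<partial>M)
      = (\<integral>\<^sup>+k. ennreal (exp (z * real k - l * (exp z - 1))) \<partial>measure_pmf (poisson_pmf l))"
    using assms(1) by (simp add: nn_integral_distr assms(2)[symmetric])
  also have "\<dots> = 1"
    using assms(3)
    by (simp add: nn_integral_measure_pmf ennreal_mult'[symmetric] pmf_poisson_exp_tilt nn_integral_pmf
        del: pmf_poisson)
  finally show ?thesis .
qed

lemma (in prob_space) indep_var_nn_integral:
  fixes A B :: "'a \<Rightarrow> ennreal"
  assumes "indep_var borel A borel B"
  shows "(\<integral>\<^sup>+\<omega>. A \<omega> * B \<omega> \<partial>M) = (\<integral>\<^sup>+\<omega>. A \<omega> \<partial>M) * (\<integral>\<^sup>+\<omega>. B \<omega> \<partial>M)"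
proof -
  have "case_bool borel borel = (\<lambda>_. borel :: ennreal measure)"
    by (rule ext) (simp split: bool.split)
  then have "indep_vars (\<lambda>_. borel) (case_bool A B) UNIV"
    using assms unfolding indep_var_def by simp
  then have "(\<integral>\<^sup>+\<omega>. (\<Prod>b\<in>UNIV. case_bool A B b \<omega>) \<partial>M) = (\<Prod>b\<in>UNIV. \<integral>\<^sup>+\<omega>. case_bool A B b \<omega> \<partial>M)"
    by (intro indep_vars_nn_integral) auto
  then show ?thesis
    by (simp add: UNIV_bool mult.commute)
qed

lemma (in prob_space) nn_integral_prod_indep_mean_one:
  fixes Y :: "nat \<Rightarrow> 'a \<Rightarrow> real"
  assumes "indep_vars (\<lambda>_. borel) Y J" "finite I" "I \<subseteq> J"
    and "\<And>i \<omega>. i \<in> I \<Longrightarrow> 0 \<le> Y i \<omega>" "\<And>i. i \<in> I \<Longrightarrow> (\<integral>\<^sup>+\<omega>. ennreal (Y i \<omega>) \<partial>M) = 1"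
  shows "(\<integral>\<^sup>+\<omega>. ennreal (\<Prod>i\<in>I. Y i \<omega>) \<partial>M) = 1"
proof -
  have "indep_vars (\<lambda>_. borel) (\<lambda>i \<omega>. ennreal (Y i \<omega>)) J"
    using assms(1) by (rule indep_vars_compose2) simp
  then have "indep_vars (\<lambda>_. borel) (\<lambda>i \<omega>. ennreal (Y i \<omega>)) I"
    using assms(3) by (rule indep_vars_subset)
  then have "(\<integral>\<^sup>+\<omega>. (\<Prod>i\<in>I. ennreal (Y i \<omega>)) \<partial>M) = (\<Prod>i\<in>I. \<integral>\<^sup>+\<omega>. ennreal (Y i \<omega>) \<partial>M)"
    using assms(2) by (intro indep_vars_nn_integral) auto
  also have "\<dots> = 1"
    using assms(5) by simp
  finally show ?thesis
    using assms(4) by (simp add: prod_ennreal)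
qed

lemma (in prob_space) borel_measurable_partial_prod:
  fixes Y :: "nat \<Rightarrow> 'a \<Rightarrow> real"
  assumes "indep_vars (\<lambda>_. borel) Y {1..}"
  shows "(\<lambda>\<omega>. \<Prod>i=1..n. Y i \<omega>) \<in> borel_measurable M"
  using assms by (intro borel_measurable_prod) (auto simp: indep_vars_def)

lemma (in prob_space) nn_integral_partial_prod_martingale:
  fixes Y :: "nat \<Rightarrow> 'a \<Rightarrow> real" and f :: "(nat \<Rightarrow> real) \<Rightarrow> ennreal"
  assumes indep: "indep_vars (\<lambda>_. borel) Y {1..}"
    and nonneg: "\<And>i \<omega>. 0 \<le> Y i \<omega>"
    and mean: "\<And>i. i \<ge> 1 \<Longrightarrow> (\<integral>\<^sup>+\<omega>. ennreal (Y i \<omega>) \<partial>M) = 1"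
    and f: "f \<in> borel_measurable (PiM {1..k} (\<lambda>_. borel))"
    and "k \<le> N"
  shows "(\<integral>\<^sup>+\<omega>. f (restrict (\<lambda>i. Y i \<omega>) {1..k}) * ennreal (\<Prod>i=1..N. Y i \<omega>) \<partial>M)
       = (\<integral>\<^sup>+\<omega>. f (restrict (\<lambda>i. Y i \<omega>) {1..k}) * ennreal (\<Prod>i=1..k. Y i \<omega>) \<partial>M)"
    (is "?lhs = ?rhs")
proof -
  define past where "past x = f x * ennreal (\<Prod>i=1..k. x i)" for x :: "nat \<Rightarrow> real"
  define future where "future x = ennreal (\<Prod>i=Suc k..N. x i)" for x :: "nat \<Rightarrow> real"
  have "past \<in> borel_measurable (PiM {1..k} (\<lambda>_. borel))"
    unfolding past_def using f by measurable
  moreover have "future \<in> borel_measurable (PiM {Suc k..N} (\<lambda>_. borel))"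
    unfolding future_def by measurable
  ultimately have "indep_var borel (past \<circ> (\<lambda>\<omega>. restrict (\<lambda>i. Y i \<omega>) {1..k}))
      borel (future \<circ> (\<lambda>\<omega>. restrict (\<lambda>i. Y i \<omega>) {Suc k..N}))"
    by (intro indep_var_compose[OF indep_var_restrict[OF indep]]) auto
  also have "past \<circ> (\<lambda>\<omega>. restrict (\<lambda>i. Y i \<omega>) {1..k})
      = (\<lambda>\<omega>. f (restrict (\<lambda>i. Y i \<omega>) {1..k}) * ennreal (\<Prod>i=1..k. Y i \<omega>))"
    by (auto simp: fun_eq_iff past_def intro!: prod.cong)
  also have "future \<circ> (\<lambda>\<omega>. restrict (\<lambda>i. Y i \<omega>) {Suc k..N}) = (\<lambda>\<omega>. ennreal (\<Prod>i=Suc k..N. Y i \<omega>))"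
    by (auto simp: fun_eq_iff future_def intro!: prod.cong)
  finally have indep_past_future: "indep_var
      borel (\<lambda>\<omega>. f (restrict (\<lambda>i. Y i \<omega>) {1..k}) * ennreal (\<Prod>i=1..k. Y i \<omega>))
      borel (\<lambda>\<omega>. ennreal (\<Prod>i=Suc k..N. Y i \<omega>))" .
  have split: "(\<Prod>i=1..N. Y i \<omega>) = (\<Prod>i=1..k. Y i \<omega>) * (\<Prod>i=Suc k..N. Y i \<omega>)" for \<omega>
  proof -
    have "{1..N} = {1..k} \<union> {Suc k..N}"
      using \<open>k \<le> N\<close> by auto
    then show ?thesis
      by (simp add: prod.union_disjoint ivl_disj_int)
  qed
  have "?lhs = (\<integral>\<^sup>+\<omega>. f (restrict (\<lambda>i. Y i \<omega>) {1..k}) * ennreal (\<Prod>i=1..k. Y i \<omega>)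
      * ennreal (\<Prod>i=Suc k..N. Y i \<omega>) \<partial>M)"
    unfolding split using nonneg by (simp add: ennreal_mult prod_nonneg mult.assoc)
  also have "\<dots> = ?rhs * (\<integral>\<^sup>+\<omega>. ennreal (\<Prod>i=Suc k..N. Y i \<omega>) \<partial>M)"
    by (rule indep_var_nn_integral[OF indep_past_future])
  also have "(\<integral>\<^sup>+\<omega>. ennreal (\<Prod>i=Suc k..N. Y i \<omega>) \<partial>M) = 1"
    using nonneg mean by (intro nn_integral_prod_indep_mean_one[OF indep]) auto
  finally show ?thesis
    by (simp only: mult_1_right)
qed

definition first_passage :: "(nat \<Rightarrow> real) \<Rightarrow> real \<Rightarrow> nat \<Rightarrow> bool" where
  "first_passage z c k \<longleftrightarrow> c < z k \<and> (\<forall>j\<in>{1..<k}. z j \<le> c)"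

lemma first_passage_unique:
  assumes "first_passage z c k" "first_passage z c k'" "1 \<le> k" "1 \<le> k'"
  shows "k = k'"
proof (rule ccontr)
  assume "k \<noteq> k'"
  then have "k \<in> {1..<k'} \<or> k' \<in> {1..<k}"
    using assms(3,4) by auto
  then show False
    using assms(1,2) unfolding first_passage_def by force
qed

lemma first_passage_cong:
  assumes "\<And>j. j \<in> {1..k} \<Longrightarrow> z j = z' j" "1 \<le> k"
  shows "first_passage z c k \<longleftrightarrow> first_passage z' c k"
  using assms by (auto simp: first_passage_def)

lemma ex_first_passage:
  "(\<exists>n\<in>{1..N}. c < z n) \<longleftrightarrow> (\<exists>k\<in>{1..N}. first_passage z c k)"
proof
  assume "\<exists>n\<in>{1..N}. c < z n"
  then obtain n where n: "n \<in> {1..N}" "c < z n"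
    by blast
  obtain k where k: "1 \<le> k" "c < z k" and least: "\<And>j. j < k \<Longrightarrow> \<not> (1 \<le> j \<and> c < z j)"
    using n exists_least_iff[of "\<lambda>k. 1 \<le> k \<and> c < z k"] by auto
  have "k \<le> n"
    using least[of n] n by force
  moreover have "first_passage z c k"
    using k least unfolding first_passage_def by force
  ultimately show "\<exists>k\<in>{1..N}. first_passage z c k"
    using k n by auto
next
  assume "\<exists>k\<in>{1..N}. first_passage z c k"
  then show "\<exists>n\<in>{1..N}. c < z n"
    unfolding first_passage_def by blast
qed

lemma (in prob_space) first_passage_bound:
  fixes Y :: "nat \<Rightarrow> 'a \<Rightarrow> real" and c :: real
  assumes indep: "indep_vars (\<lambda>_. borel) Y {1..}"
    and nonneg: "\<And>i \<omega>. 0 \<le> Y i \<omega>"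
    and mean: "\<And>i. i \<ge> 1 \<Longrightarrow> (\<integral>\<^sup>+\<omega>. ennreal (Y i \<omega>) \<partial>M) = 1"
    and k: "k \<in> {1..N}"
  defines "A \<equiv> {\<omega>\<in>space M. first_passage (\<lambda>n. \<Prod>i=1..n. Y i \<omega>) c k}"
  shows "ennreal c * emeasure M A \<le> (\<integral>\<^sup>+\<omega>. ennreal (\<Prod>i=1..N. Y i \<omega>) * indicator A \<omega> \<partial>M)"
proof -
  define hit where "hit x = (of_bool (first_passage (\<lambda>n. \<Prod>i=1..n. x i) c k) :: ennreal)"
    for x :: "nat \<Rightarrow> real"
  note borel_measurable_partial_prod[OF indep, measurable]
  have "A \<in> sets M"
    unfolding A_def first_passage_def by measurable
  have hit_meas: "hit \<in> borel_measurable (PiM {1..k} (\<lambda>_. borel))"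
    unfolding hit_def first_passage_def by measurable
  have hit_eq: "hit (restrict (\<lambda>i. Y i \<omega>) {1..k}) = indicator A \<omega>" if "\<omega> \<in> space M" for \<omega>
  proof -
    have "first_passage (\<lambda>n. \<Prod>i=1..n. restrict (\<lambda>i. Y i \<omega>) {1..k} i) c k
        \<longleftrightarrow> first_passage (\<lambda>n. \<Prod>i=1..n. Y i \<omega>) c k"
      using k by (intro first_passage_cong) auto
    then show ?thesis
      using that by (simp add: hit_def A_def indicator_def)
  qed
  have "ennreal c * emeasure M A = (\<integral>\<^sup>+\<omega>. ennreal c * indicator A \<omega> \<partial>M)"
    using \<open>A \<in> sets M\<close> by (simp add: nn_integral_cmult_indicator)
  also have "\<dots> \<le> (\<integral>\<^sup>+\<omega>. indicator A \<omega> * ennreal (\<Prod>i=1..k. Y i \<omega>) \<partial>M)"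
    by (intro nn_integral_mono) (auto simp: A_def first_passage_def indicator_def intro!: ennreal_leI)
  also have "\<dots> = (\<integral>\<^sup>+\<omega>. hit (restrict (\<lambda>i. Y i \<omega>) {1..k}) * ennreal (\<Prod>i=1..k. Y i \<omega>) \<partial>M)"
    by (intro nn_integral_cong) (simp only: hit_eq)
  also have "\<dots> = (\<integral>\<^sup>+\<omega>. hit (restrict (\<lambda>i. Y i \<omega>) {1..k}) * ennreal (\<Prod>i=1..N. Y i \<omega>) \<partial>M)"
    using k by (intro nn_integral_partial_prod_martingale[symmetric] indep nonneg mean hit_meas) auto
  also have "\<dots> = (\<integral>\<^sup>+\<omega>. ennreal (\<Prod>i=1..N. Y i \<omega>) * indicator A \<omega> \<partial>M)"
    by (intro nn_integral_cong) (simp only: hit_eq mult.commute)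
  finally show ?thesis .
qed

lemma (in prob_space) ville_inequality_finite:
  fixes Y :: "nat \<Rightarrow> 'a \<Rightarrow> real"
  assumes indep: "indep_vars (\<lambda>_. borel) Y {1..}"
    and nonneg: "\<And>i \<omega>. 0 \<le> Y i \<omega>"
    and mean: "\<And>i. i \<ge> 1 \<Longrightarrow> (\<integral>\<^sup>+\<omega>. ennreal (Y i \<omega>) \<partial>M) = 1"
  shows "ennreal c * emeasure M {\<omega>\<in>space M. \<exists>n\<in>{1..N}. c < (\<Prod>i=1..n. Y i \<omega>)} \<le> 1"
proof -
  define A where "A k = {\<omega>\<in>space M. first_passage (\<lambda>n. \<Prod>i=1..n. Y i \<omega>) c k}" for k
  note borel_measurable_partial_prod[OF indep, measurable]
  have [measurable]: "A k \<in> sets M" for k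
    unfolding A_def first_passage_def by measurable
  have disj: "disjoint_family_on A {1..N}"
    using first_passage_unique unfolding disjoint_family_on_def A_def by fastforce
  have "(\<exists>n\<in>{1..N}. c < (\<Prod>i=1..n. Y i \<omega>)) \<longleftrightarrow> (\<exists>k\<in>{1..N}. \<omega> \<in> A k)" if "\<omega> \<in> space M" for \<omega>
    using that ex_first_passage[of N c "\<lambda>n. \<Prod>i=1..n. Y i \<omega>"] by (simp add: A_def)
  then have "{\<omega>\<in>space M. \<exists>n\<in>{1..N}. c < (\<Prod>i=1..n. Y i \<omega>)} = (\<Union>k\<in>{1..N}. A k)"
    by (auto simp: A_def)
  then have "ennreal c * emeasure M {\<omega>\<in>space M. \<exists>n\<in>{1..N}. c < (\<Prod>i=1..n. Y i \<omega>)}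
      = ennreal c * (\<Sum>k\<in>{1..N}. emeasure M (A k))"
    by (subst sum_emeasure[OF _ disj]) auto
  also have "\<dots> = (\<Sum>k\<in>{1..N}. ennreal c * emeasure M (A k))"
    by (rule sum_distrib_left)
  also have "\<dots> \<le> (\<Sum>k\<in>{1..N}. \<integral>\<^sup>+\<omega>. ennreal (\<Prod>i=1..N. Y i \<omega>) * indicator (A k) \<omega> \<partial>M)"
    unfolding A_def by (intro sum_mono first_passage_bound[OF indep nonneg mean])
  also have "\<dots> = (\<integral>\<^sup>+\<omega>. (\<Sum>k\<in>{1..N}. ennreal (\<Prod>i=1..N. Y i \<omega>) * indicator (A k) \<omega>) \<partial>M)"
    by (rule nn_integral_sum[symmetric]) measurable
  also have "\<dots> = (\<integral>\<^sup>+\<omega>. ennreal (\<Prod>i=1..N. Y i \<omega>) * indicator (\<Union>k\<in>{1..N}. A k) \<omega> \<partial>M)"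
    by (simp only: indicator_UN_disjoint[OF _ disj] sum_distrib_left finite_atLeastAtMost)
  also have "\<dots> \<le> (\<integral>\<^sup>+\<omega>. ennreal (\<Prod>i=1..N. Y i \<omega>) \<partial>M)"
    by (intro nn_integral_mono) (simp add: indicator_def)
  also have "\<dots> = 1"
    using nonneg mean by (intro nn_integral_prod_indep_mean_one[OF indep]) auto
  finally show ?thesis .
qed

lemma (in prob_space) ville_inequality_strict:
  fixes Y :: "nat \<Rightarrow> 'a \<Rightarrow> real"
  assumes indep: "indep_vars (\<lambda>_. borel) Y {1..}"
    and nonneg: "\<And>i \<omega>. 0 \<le> Y i \<omega>"
    and mean: "\<And>i. i \<ge> 1 \<Longrightarrow> (\<integral>\<^sup>+\<omega>. ennreal (Y i \<omega>) \<partial>M) = 1"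
    and "0 < c"
  shows "measure M {\<omega>\<in>space M. \<exists>n\<in>{1..}. c < (\<Prod>i=1..n. Y i \<omega>)} \<le> 1 / c"
proof -
  define B where "B N = {\<omega>\<in>space M. \<exists>n\<in>{1..N}. c < (\<Prod>i=1..n. Y i \<omega>)}" for N
  note borel_measurable_partial_prod[OF indep, measurable]
  have B_sets: "B N \<in> sets M" for N
    unfolding B_def by measurable
  have "incseq B"
    unfolding B_def incseq_def by force
  then have "(\<lambda>N. measure M (B N)) \<longlonglongrightarrow> measure M (\<Union>N. B N)"
    using B_sets by (intro finite_Lim_measure_incseq) auto
  moreover have "measure M (B N) \<le> 1 / c" for N
  proof -
    have "ennreal (c * measure M (B N)) \<le> 1"
      using ville_inequality_finite[OF indep nonneg mean, of c N] \<open>0 < c\<close>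
      by (simp add: B_def emeasure_eq_measure ennreal_mult')
    then show ?thesis
      using \<open>0 < c\<close> by (simp add: field_simps ennreal_le_1)
  qed
  ultimately have "measure M (\<Union>N. B N) \<le> 1 / c"
    by (intro LIMSEQ_le_const2) auto
  moreover have "(\<Union>N. B N) = {\<omega>\<in>space M. \<exists>n\<in>{1..}. c < (\<Prod>i=1..n. Y i \<omega>)}"
    unfolding B_def by force
  ultimately show ?thesis
    by simp
qed

lemma (in prob_space) ville_inequality:
  fixes Y :: "nat \<Rightarrow> 'a \<Rightarrow> real"
  assumes indep: "indep_vars (\<lambda>_. borel) Y {1..}"
    and nonneg: "\<And>i \<omega>. 0 \<le> Y i \<omega>"
    and mean: "\<And>i. i \<ge> 1 \<Longrightarrow> (\<integral>\<^sup>+\<omega>. ennreal (Y i \<omega>) \<partial>M) = 1"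
    and "0 < c"
  shows "measure M {\<omega>\<in>space M. ereal c \<le> (SUP n\<in>{1..}. ereal (\<Prod>i=1..n. Y i \<omega>))} \<le> 1 / c"
proof (rule dense_ge)
  fix w :: real
  assume "1 / c < w"
  moreover have "0 < 1 / c"
    using \<open>0 < c\<close> by simp
  ultimately have "0 < w"
    by linarith
  then have "0 < 1 / w" "1 / w < c"
    using \<open>0 < c\<close> \<open>1 / c < w\<close> by (auto simp: field_simps)
  note borel_measurable_partial_prod[OF indep, measurable]
  have "\<exists>n\<in>{1..}. 1 / w < (\<Prod>i=1..n. Y i \<omega>)"
    if "ereal c \<le> (SUP n\<in>{1..}. ereal (\<Prod>i=1..n. Y i \<omega>))" for \<omega>
    using le_SUP_iff[THEN iffD1, OF that, rule_format, of "ereal (1 / w)"] \<open>1 / w < c\<close> by auto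
  then have "{\<omega>\<in>space M. ereal c \<le> (SUP n\<in>{1..}. ereal (\<Prod>i=1..n. Y i \<omega>))}
      \<subseteq> {\<omega>\<in>space M. \<exists>n\<in>{1..}. 1 / w < (\<Prod>i=1..n. Y i \<omega>)}"
    by blast
  then have "measure M {\<omega>\<in>space M. ereal c \<le> (SUP n\<in>{1..}. ereal (\<Prod>i=1..n. Y i \<omega>))}
      \<le> measure M {\<omega>\<in>space M. \<exists>n\<in>{1..}. 1 / w < (\<Prod>i=1..n. Y i \<omega>)}"
    by (rule finite_measure_mono) measurable
  also have "\<dots> \<le> w"
    using ville_inequality_strict[OF indep nonneg mean \<open>0 < 1 / w\<close>] by simp
  finally show "measure M {\<omega>\<in>space M. ereal c \<le> (SUP n\<in>{1..}. ereal (\<Prod>i=1..n. Y i \<omega>))} \<le> w" .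
qed

lemma VV_eq_sum: "VV lam s n = (\<Sum>i=1..n. lam i) * (exp s - 1)"
  by (cases "n = 0") (auto simp: VV_def lam_bar_def)

lemma lam_bar_pos:
  assumes "\<And>i. i \<ge> 1 \<Longrightarrow> lam i > 0" and "m \<ge> 1"
  shows "0 < lam_bar lam m"
proof -
  have "0 < (\<Sum>i=1..m. lam i)"
    using assms by (intro sum_pos) auto
  then show ?thesis
    using assms(2) by (simp add: lam_bar_def)
qed

lemma prod_exp_tilt_eq:
  "(\<Prod>i=1..n. exp (z * real (X i \<omega>) - lam i * (exp z - 1))) = exp (z * partial_sum X n \<omega> - VV lam z n)"
  by (simp add: VV_eq_sum partial_sum_def exp_sum[symmetric] sum_subtractf sum_distrib_left sum_distrib_right)

lemma ereal_exp_le_SUP_exp: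
  fixes a :: "'i \<Rightarrow> real"
  assumes "0 \<le> (SUP n\<in>A. ereal (a n - b))"
  shows "ereal (exp b) \<le> (SUP n\<in>A. ereal (exp (a n)))"
  unfolding le_SUP_iff
proof (intro allI impI)
  fix y
  assume "y < ereal (exp b)"
  show "\<exists>n\<in>A. y < ereal (exp (a n))"
  proof (cases "y \<le> 0")
    case True
    obtain n where "n \<in> A"
      using le_SUP_iff[THEN iffD1, OF assms, rule_format, of "-1"] by auto
    moreover have "y < ereal (exp (a n))"
      using True by (rule le_less_trans) simp
    ultimately show ?thesis ..
  next
    case False
    then obtain r where r: "y = ereal r" "0 < r"
      using \<open>y < ereal (exp b)\<close> by (cases y) auto
    then have "exp (ln r) < exp b"
      using \<open>y < ereal (exp b)\<close> by simp
    then obtain n where "n \<in> A" "ln r < a n"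
      using le_SUP_iff[THEN iffD1, OF assms, rule_format, of "ereal (ln r - b)"] by auto
    moreover have "r < exp (a n)"
      using \<open>ln r < a n\<close> r(2) exp_less_cancel_iff[of "ln r" "a n"] by simp
    ultimately show ?thesis
      using r(1) by auto
  qed
qed

lemma inverse_ville_threshold_eq:
  assumes "0 < lam_bar lam m" and "0 < \<theta>"
  shows "1 / exp (ln (\<theta> / lam_bar lam m) * (real m * \<theta>) - VV lam (ln (\<theta> / lam_bar lam m)) m)
    = (exp (\<theta> - lam_bar lam m + \<theta> * ln (lam_bar lam m / \<theta>))) ^ m"
proof -
  define L where "L = lam_bar lam m"
  define \<zeta> where "\<zeta> = ln (\<theta> / L)"
  have "ln (L / \<theta>) = - \<zeta>"
    using assms by (simp add: L_def \<zeta>_def ln_div)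
  moreover have "VV lam \<zeta> m = real m * (\<theta> - L)"
    using assms by (simp add: VV_def L_def \<zeta>_def field_simps)
  ultimately have "- (\<zeta> * (real m * \<theta>) - VV lam \<zeta> m) = real m * (\<theta> - L + \<theta> * ln (L / \<theta>))"
    by (simp add: algebra_simps)
  then have "1 / exp (\<zeta> * (real m * \<theta>) - VV lam \<zeta> m) = exp (real m * (\<theta> - L + \<theta> * ln (L / \<theta>)))"
    by (simp add: exp_minus[symmetric] divide_inverse)
  then show ?thesis
    by (simp add: L_def \<zeta>_def exp_of_nat_mult)
qed

theorem theorem18:
  fixes M :: "'a measure" and X :: "nat \<Rightarrow> 'a \<Rightarrow> nat" and lam :: "nat \<Rightarrow> real"
    and m :: nat and \<theta> :: real
  assumes "prob_space M"
    and "\<And>i. i \<ge> 1 \<Longrightarrow> lam i > 0"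
    and "prob_space.indep_vars M (\<lambda>_. count_space UNIV) X {1..}"
    and "\<And>i. i \<ge> 1 \<Longrightarrow> distr M (count_space UNIV) (X i) = measure_pmf (poisson_pmf (lam i))"
    and "m \<ge> 1" and "\<theta> > 0"
  shows "let \<zeta> = ln (\<theta> / lam_bar lam m) in
    measure M {\<omega> \<in> space M.
        (SUP n\<in>{1..}. ereal (\<zeta> * (partial_sum X n \<omega> - real m * \<theta>) - VV lam \<zeta> n + VV lam \<zeta> m)) \<ge> 0}
      \<le> (exp (\<theta> - lam_bar lam m + \<theta> * ln (lam_bar lam m / \<theta>))) ^ m"
proof -
  interpret prob_space M
    by fact
  define \<zeta> where "\<zeta> = ln (\<theta> / lam_bar lam m)"
  define Y where "Y i \<omega> = exp (\<zeta> * real (X i \<omega>) - lam i * (exp \<zeta> - 1))" for i \<omega>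
  define c where "c = exp (\<zeta> * (real m * \<theta>) - VV lam \<zeta> m)"
  have indep: "indep_vars (\<lambda>_. borel) Y {1..}"
    unfolding Y_def using assms(3) by (rule indep_vars_compose2) simp
  note borel_measurable_partial_prod[OF indep, measurable]
  have mean: "(\<integral>\<^sup>+\<omega>. ennreal (Y i \<omega>) \<partial>M) = 1" if "i \<ge> 1" for i
    unfolding Y_def using assms(2-4) that
    by (intro nn_integral_poisson_exp_tilt) (auto simp: indep_vars_def)
  have "{\<omega> \<in> space M. (SUP n\<in>{1..}. ereal (\<zeta> * (partial_sum X n \<omega> - real m * \<theta>) - VV lam \<zeta> n + VV lam \<zeta> m)) \<ge> 0}
      \<subseteq> {\<omega>\<in>space M. ereal c \<le> (SUP n\<in>{1..}. ereal (\<Prod>i=1..n. Y i \<omega>))}" (is "?E \<subseteq> ?G")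
    unfolding c_def Y_def prod_exp_tilt_eq
    by (auto intro!: ereal_exp_le_SUP_exp simp: algebra_simps)
  then have "measure M ?E \<le> measure M ?G"
    by (rule finite_measure_mono) measurable
  also have "\<dots> \<le> 1 / c"
    by (rule ville_inequality[OF indep _ mean]) (simp_all add: Y_def c_def)
  also have "1 / c = (exp (\<theta> - lam_bar lam m + \<theta> * ln (lam_bar lam m / \<theta>))) ^ m"
    unfolding c_def \<zeta>_def using lam_bar_pos[OF assms(2,5)] \<open>\<theta> > 0\<close>
    by (rule inverse_ville_threshold_eq)
  finally show ?thesis
    unfolding \<zeta>_def Let_def .
qed

end
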